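(* Let $R$ be a discrete valuation ring of characteristic $p>0$ with field of fractions $K$. Let $H$ be a primitively generated $K$-Hopf algebra of rank $p^n$, let $t_1,\dots,t_n$ be a $K$-basis of $\mathrm{Prim}(H)$ with associated matrix $B\in M_n(R)$ (so $t_i^p=\sum_j b_{j,i}t_j$). For $\Theta=(\theta_{j,i})\in\mathrm{GL}_n(K)$ with $A=\Theta^{-1}B\Theta^{(p)}\in M_n(R)$, let $H_\Theta=R[\{\sum_j\theta_{j,i}t_j:1\le i\le n\}]\subseteq H$ be the corresponding $R$-Hopf order (the image of the $R$-Hopf algebra with associated matrix $A$ under $u_i\mapsto\sum_j\theta_{j,i}t_j$). Let $\Theta$ be such a matrix and let $\Theta'\in \mathrm{GL}_n(K)$. Then the following are equivalent: (a) $A'=\Theta'^{-1}B\Theta'^{(p)}\in M_n(R)$ and $H_{\Theta'}=H_\Theta$ (i.e. $A$ and $A'$ are associated to the same Hopf order); (b) $\Theta'=\Theta U$ for some $U\in\mathrm{GL}_n(R)$.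
   Context: $\Theta^{(p)}$ denotes the matrix obtained from $\Theta$ by raising each entry to the $p$-th power. All Hopf algebras are commutative, cocommutative, finitely generated projective, of $p$-power rank. $t$ is primitive if $\Delta(t)=t\otimes1+1\otimes t$; $\mathrm{Prim}(H)$ is the module of primitives; $H$ is primitively generated if generated as an algebra by its primitives. An $R$-Hopf order in a $K$-Hopf algebra $H$ is a finitely generated projective $R$-submodule which is an $R$-Hopf algebra under the inherited operations and spans $H$ over $K$. *)

theory Defs
  imports "Jordan_Normal_Form.Matrix"
begin

definition is_dvr_with_frac_field :: "'k::field set \<Rightarrow> bool" where
  "is_dvr_with_frac_field R \<longleftrightarrow>
     0 \<in> R \<and> 1 \<in> R \<and> (\<forall>x\<in>R. \<forall>y\<in>R. x + y \<in> R \<and> x * y \<in> R \<and> - x \<in> R) \<and>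
     (\<exists>\<pi>. \<pi> \<in> R \<and> \<pi> \<noteq> 0 \<and> inverse \<pi> \<notin> R \<and>
        (\<forall>x. x \<noteq> 0 \<longrightarrow> (\<exists>u k. u \<in> R \<and> inverse u \<in> R \<and> x = u * \<pi> powi k)))"

definition mat_over :: "nat \<Rightarrow> 'a set \<Rightarrow> 'a mat set" where
  "mat_over n S = {M. M \<in> carrier_mat n n \<and> (\<forall>i<n. \<forall>j<n. M $$ (i,j) \<in> S)}"

definition GL_over :: "nat \<Rightarrow> 'a::semiring_1 set \<Rightarrow> 'a mat set" where
  "GL_over n S = {M. M \<in> mat_over n S \<and>
      (\<exists>N \<in> mat_over n S. M * N = 1\<^sub>m n \<and> N * M = 1\<^sub>m n)}"

definition mat_inv :: "nat \<Rightarrow> 'a::semiring_1 mat \<Rightarrow> 'a mat" where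
  "mat_inv n M = (SOME N. N \<in> carrier_mat n n \<and> M * N = 1\<^sub>m n \<and> N * M = 1\<^sub>m n)"

definition mat_frob :: "nat \<Rightarrow> 'a::monoid_mult mat \<Rightarrow> 'a mat" where
  "mat_frob p M = map_mat (\<lambda>x. x ^ p) M"

inductive_set subalg_gen :: "'k set \<Rightarrow> ('k \<Rightarrow> 'h::comm_ring_1) \<Rightarrow> 'h set \<Rightarrow> 'h set"
  for R iota G where
  scal: "r \<in> R \<Longrightarrow> iota r \<in> subalg_gen R iota G"
| gen: "g \<in> G \<Longrightarrow> g \<in> subalg_gen R iota G"
| add: "x \<in> subalg_gen R iota G \<Longrightarrow> y \<in> subalg_gen R iota G \<Longrightarrow> x + y \<in> subalg_gen R iota G"
| mult: "x \<in> subalg_gen R iota G \<Longrightarrow> y \<in> subalg_gen R iota G \<Longrightarrow> x * y \<in> subalg_gen R iota G"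

definition H_order :: "'k set \<Rightarrow> ('k \<Rightarrow> 'h::comm_ring_1) \<Rightarrow> nat \<Rightarrow> (nat \<Rightarrow> 'h) \<Rightarrow> 'k mat \<Rightarrow> 'h set" where
  "H_order R iota n t \<Theta> =
     subalg_gen R iota {(\<Sum>j<n. iota (\<Theta> $$ (j,i)) * t j) | i. i < n}"

definition exps :: "nat \<Rightarrow> nat \<Rightarrow> (nat \<Rightarrow> nat) set" where
  "exps p n = {a. (\<forall>i<n. a i < p) \<and> (\<forall>i\<ge>n. a i = 0)}"

definition monom_t :: "nat \<Rightarrow> (nat \<Rightarrow> 'h::comm_ring_1) \<Rightarrow> (nat \<Rightarrow> nat) \<Rightarrow> 'h" where
  "monom_t n t a = (\<Prod>i<n. t i ^ a i)"

definition prim_gen_algebra ::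
  "nat \<Rightarrow> nat \<Rightarrow> ('k::field \<Rightarrow> 'h::comm_ring_1) \<Rightarrow> (nat \<Rightarrow> 'h) \<Rightarrow> 'k mat \<Rightarrow> bool" where
  "prim_gen_algebra p n iota t B \<longleftrightarrow>
     iota 0 = 0 \<and> iota 1 = 1 \<and> (\<forall>x y. iota (x + y) = iota x + iota y) \<and>
     (\<forall>x y. iota (x * y) = iota x * iota y) \<and>
     (\<forall>c. (\<Sum>a\<in>exps p n. iota (c a) * monom_t n t a) = 0 \<longrightarrow> (\<forall>a\<in>exps p n. c a = 0)) \<and>
     (\<forall>h. \<exists>c. h = (\<Sum>a\<in>exps p n. iota (c a) * monom_t n t a)) \<and>
     (\<forall>i<n. t i ^ p = (\<Sum>j<n. iota (B $$ (j,i)) * t j))"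

end

theory Submission
  imports Defs "HOL-Computational_Algebra.Primes" "Jordan_Normal_Form.Determinant"
begin

(* Put s_i = sum_j theta_{j,i} t_j.  In characteristic p these satisfy s_i^p = sum_j a_{j,i} s_j
   with A = Theta^-1 B Theta^(p), so when A has entries in R every monomial in the s_i reduces to an
   R-combination of the reduced monomials s^a (0 <= a_i < p): H_Theta is the R-span of these p^n
   monomials.  Over K the t_j are combinations of the s_i, so the reduced monomials in s span H and,
   being p^n in number, form a K-basis.  Reading off coordinates, s'_i = sum_k u_{k,i} s_k with
   U = Theta^-1 Theta' lies in H_Theta iff every u_{k,i} lies in R.  Hence H_Theta' = H_Theta forces
   U and U^-1 to have entries in R; conversely, for U in GL_n(R) the generators of H_{Theta U} and
   H_Theta are R-combinations of each other and A' = U^-1 A U^(p). *)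

lemma CHAR_eq_prime:
  assumes "prime p" "of_nat p = (0::'a::comm_ring_1)" "(1::'a) \<noteq> 0"
  shows "CHAR('a) = p"
proof -
  have "CHAR('a) dvd p" using assms(2) by (simp add: of_nat_eq_0_iff_char_dvd)
  moreover have "CHAR('a) \<noteq> 1" using of_nat_CHAR[where ?'a = 'a] assms(3) by auto
  ultimately show ?thesis using assms(1) prime_nat_iff by blast
qed

lemma power_sum_prime_char:
  fixes f :: "'b \<Rightarrow> 'a::comm_ring_1"
  assumes "prime p" "of_nat p = (0::'a)"
  shows "(\<Sum>i\<in>A. f i) ^ p = (\<Sum>i\<in>A. f i ^ p)"
proof (cases "(1::'a) = 0")
  case True
  have trivial: "x = 0" for x :: 'a
  proof -
    have "x = x * 1" by simp
    then show ?thesis unfolding True by simp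
  qed
  show ?thesis by (rule trans[OF trivial trivial[symmetric]])
next
  case False
  have "CHAR('a) = p" by (rule CHAR_eq_prime[OF assms False])
  with assms(1) show ?thesis by (intro freshmans_dream_sum) simp_all
qed

lemma mat_frob_carrier [simp]: "M \<in> carrier_mat nr nc \<Longrightarrow> mat_frob p M \<in> carrier_mat nr nc"
  by (simp add: mat_frob_def)

lemma mat_frob_mult:
  fixes A B :: "'a::field mat"
  assumes "prime p" "of_nat p = (0::'a)" "A \<in> carrier_mat nr n" "B \<in> carrier_mat n nc"
  shows "mat_frob p (A * B) = mat_frob p A * mat_frob p B"
proof -
  have "CHAR('a) = p" by (rule CHAR_eq_prime[OF assms(1,2)]) simp
  interpret frobenius: comm_ring_hom "\<lambda>x::'a. x ^ p"
  proof
    show "(x + y) ^ p = x ^ p + y ^ p" for x y :: 'a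
      by (rule freshmans_dream) (use assms(1) \<open>CHAR('a) = p\<close> in simp_all)
  qed (use assms(1) prime_gt_0_nat in \<open>simp_all add: power_mult_distrib\<close>)
  show ?thesis unfolding mat_frob_def using assms(3,4) by (rule frobenius.mat_hom_mult)
qed

definition is_subring :: "'a::comm_ring_1 set \<Rightarrow> bool" where
  "is_subring Q \<longleftrightarrow>
     0 \<in> Q \<and> 1 \<in> Q \<and> (\<forall>x\<in>Q. - x \<in> Q) \<and> (\<forall>x\<in>Q. \<forall>y\<in>Q. x + y \<in> Q \<and> x * y \<in> Q)"

lemma subring_closed:
  assumes "is_subring Q"
  shows "0 \<in> Q" "1 \<in> Q" "x \<in> Q \<Longrightarrow> y \<in> Q \<Longrightarrow> x + y \<in> Q" "x \<in> Q \<Longrightarrow> y \<in> Q \<Longrightarrow> x * y \<in> Q"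
  using assms by (simp_all add: is_subring_def)

lemma dvr_is_subring: "is_dvr_with_frac_field R \<Longrightarrow> is_subring R"
  unfolding is_dvr_with_frac_field_def is_subring_def by blast

lemma is_subring_UNIV: "is_subring UNIV"
  by (simp add: is_subring_def)

lemma subring_sum: "is_subring Q \<Longrightarrow> (\<And>x. x \<in> A \<Longrightarrow> f x \<in> Q) \<Longrightarrow> sum f A \<in> Q"
  by (induction A rule: infinite_finite_induct) (simp_all add: subring_closed)

lemma subring_power: "is_subring Q \<Longrightarrow> x \<in> Q \<Longrightarrow> x ^ k \<in> Q"
  by (induction k) (simp_all add: subring_closed)

lemma mat_over_carrier: "M \<in> mat_over n S \<Longrightarrow> M \<in> carrier_mat n n"
  by (simp add: mat_over_def)

lemma mat_over_entry: "M \<in> mat_over n S \<Longrightarrow> i < n \<Longrightarrow> j < n \<Longrightarrow> M $$ (i, j) \<in> S"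
  by (simp add: mat_over_def)

lemma mat_over_UNIV: "M \<in> carrier_mat n n \<Longrightarrow> M \<in> mat_over n UNIV"
  by (simp add: mat_over_def)

lemma index_mult_mat_sum:
  assumes "A \<in> carrier_mat n n" "B \<in> carrier_mat n n" "i < n" "j < n"
  shows "(A * B) $$ (i, j) = (\<Sum>k<n. A $$ (i, k) * B $$ (k, j))"
  using assms by (simp add: scalar_prod_def atLeast0LessThan)

lemma mat_over_mult:
  assumes Q: "is_subring Q" and X: "X \<in> mat_over n Q" and Y: "Y \<in> mat_over n Q"
  shows "X * Y \<in> mat_over n Q"
proof -
  have "(X * Y) $$ (i, j) \<in> Q" if "i < n" "j < n" for i j
    unfolding index_mult_mat_sum[OF mat_over_carrier[OF X] mat_over_carrier[OF Y] that]
    using that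
    by (intro subring_sum[OF Q] subring_closed(4)[OF Q] mat_over_entry[OF X] mat_over_entry[OF Y]) auto
  then show ?thesis using X Y by (auto simp: mat_over_def)
qed

lemma mat_over_frob: "is_subring Q \<Longrightarrow> X \<in> mat_over n Q \<Longrightarrow> mat_frob p X \<in> mat_over n Q"
  by (auto simp: mat_over_def mat_frob_def subring_power)

lemma GL_over_mat_over: "M \<in> GL_over n S \<Longrightarrow> M \<in> mat_over n S"
  by (simp add: GL_over_def)

lemma GL_over_carrier: "M \<in> GL_over n S \<Longrightarrow> M \<in> carrier_mat n n"
  by (simp add: GL_over_def mat_over_def)

lemma mat_inv_eqI:
  assumes "M \<in> carrier_mat n n" "X \<in> carrier_mat n n" "M * X = 1\<^sub>m n" "X * M = 1\<^sub>m n"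
  shows "mat_inv n M = X"
proof -
  let ?N = "mat_inv n M"
  have "?N \<in> carrier_mat n n \<and> M * ?N = 1\<^sub>m n \<and> ?N * M = 1\<^sub>m n"
    unfolding mat_inv_def by (rule someI[of _ X]) (use assms in blast)
  then have N: "?N \<in> carrier_mat n n" "?N * M = 1\<^sub>m n" by simp_all
  have "?N = ?N * (M * X)" using assms N by simp
  also have "\<dots> = (?N * M) * X" by (rule assoc_mult_mat[symmetric]) (use assms N in auto)
  also have "\<dots> = X" unfolding N(2) using assms(2) by simp
  finally show ?thesis .
qed

lemma GL_over_mat_inv:
  assumes "M \<in> GL_over n S"
  shows "mat_inv n M \<in> mat_over n S" "M * mat_inv n M = 1\<^sub>m n" "mat_inv n M * M = 1\<^sub>m n"
proof -
  obtain N where "N \<in> mat_over n S" "M * N = 1\<^sub>m n" "N * M = 1\<^sub>m n"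
    using assms by (auto simp: GL_over_def)
  moreover have "mat_inv n M = N"
    using calculation GL_over_carrier[OF assms] by (intro mat_inv_eqI) (auto simp: mat_over_def)
  ultimately show "mat_inv n M \<in> mat_over n S" "M * mat_inv n M = 1\<^sub>m n" "mat_inv n M * M = 1\<^sub>m n"
    by simp_all
qed

lemma GL_over_mat_inv_carrier: "M \<in> GL_over n S \<Longrightarrow> mat_inv n M \<in> carrier_mat n n"
  by (rule mat_over_carrier[OF GL_over_mat_inv(1)])

lemma GL_overI:
  fixes U :: "'a::field mat"
  assumes "U \<in> mat_over n S" "V \<in> mat_over n S" "U * V = 1\<^sub>m n"
  shows "U \<in> GL_over n S"
proof -
  have "V * U = 1\<^sub>m n"
    by (rule mat_mult_left_right_inverse[OF mat_over_carrier[OF assms(1)] mat_over_carrier[OF assms(2)] assms(3)])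
  with assms show ?thesis unfolding GL_over_def by blast
qed

lemma mult_mat_inv_mult:
  assumes "M \<in> GL_over n S" "X \<in> carrier_mat n n"
  shows "M * (mat_inv n M * X) = X"
proof -
  have "M * (mat_inv n M * X) = (M * mat_inv n M) * X"
    using assms GL_over_carrier[OF assms(1)] GL_over_mat_inv_carrier[OF assms(1)] by simp
  also have "\<dots> = X" unfolding GL_over_mat_inv(2)[OF assms(1)] using assms(2) by simp
  finally show ?thesis .
qed

lemma mat_inv_mult_inverse:
  assumes "M \<in> GL_over n S" "M' \<in> GL_over n S'"
  shows "(mat_inv n M * M') * (mat_inv n M' * M) = 1\<^sub>m n"
proof -
  have "M' * (mat_inv n M' * M) = M" by (rule mult_mat_inv_mult[OF assms(2) GL_over_carrier[OF assms(1)]])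
  then show ?thesis
    using GL_over_carrier[OF assms(1)] GL_over_carrier[OF assms(2)] GL_over_mat_inv_carrier[OF assms(1)]
      GL_over_mat_inv_carrier[OF assms(2)] GL_over_mat_inv(3)[OF assms(1)]
    by (simp add: assoc_mult_mat[of _ n n _ n _ n])
qed

lemma mat_inv_mult:
  assumes "M \<in> GL_over n S" "U \<in> GL_over n S'"
  shows "mat_inv n (M * U) = mat_inv n U * mat_inv n M"
proof (rule mat_inv_eqI)
  note carriers = GL_over_carrier[OF assms(1)] GL_over_carrier[OF assms(2)]
    GL_over_mat_inv_carrier[OF assms(1)] GL_over_mat_inv_carrier[OF assms(2)]
  have "U * (mat_inv n U * mat_inv n M) = mat_inv n M" by (rule mult_mat_inv_mult[OF assms(2) carriers(3)])
  then show "M * U * (mat_inv n U * mat_inv n M) = 1\<^sub>m n"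
    using carriers GL_over_mat_inv(2)[OF assms(1)] by (simp add: assoc_mult_mat[of _ n n _ n _ n])
  have "mat_inv n M * (M * U) = U"
    using carriers GL_over_mat_inv(3)[OF assms(1)] by (simp flip: assoc_mult_mat[of _ n n _ n _ n])
  then show "mat_inv n U * mat_inv n M * (M * U) = 1\<^sub>m n"
    using carriers GL_over_mat_inv(3)[OF assms(2)] by (simp add: assoc_mult_mat[of _ n n _ n _ n])
qed (use GL_over_carrier[OF assms(1)] GL_over_carrier[OF assms(2)]
       GL_over_mat_inv_carrier[OF assms(1)] GL_over_mat_inv_carrier[OF assms(2)] in simp_all)

lemma assoc_matrix_mult:
  fixes M U :: "'a::field mat"
  assumes "prime p" "of_nat p = (0::'a)" "B \<in> carrier_mat n n" "M \<in> GL_over n S" "U \<in> GL_over n S'"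
  shows "mat_inv n (M * U) * B * mat_frob p (M * U)
           = mat_inv n U * (mat_inv n M * B * mat_frob p M) * mat_frob p U"
  using assms GL_over_carrier[OF assms(4)] GL_over_carrier[OF assms(5)]
    GL_over_mat_inv_carrier[OF assms(4)] GL_over_mat_inv_carrier[OF assms(5)]
  by (simp add: mat_inv_mult mat_frob_mult assoc_mult_mat[of _ n n _ n _ n] mult_carrier_mat[of _ n n])

lemma assoc_matrix_mult_mem_mat_over:
  fixes M U :: "'a::field mat"
  assumes "prime p" "of_nat p = (0::'a)" "is_subring Q" "B \<in> carrier_mat n n"
    and "M \<in> GL_over n S" "U \<in> GL_over n Q" "mat_inv n M * B * mat_frob p M \<in> mat_over n Q"
  shows "mat_inv n (M * U) * B * mat_frob p (M * U) \<in> mat_over n Q"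
  unfolding assoc_matrix_mult[OF assms(1,2,4,5,6)]
  by (rule mat_over_mult[OF assms(3) mat_over_mult[OF assms(3) GL_over_mat_inv(1)[OF assms(6)] assms(7)]
        mat_over_frob[OF assms(3) GL_over_mat_over[OF assms(6)]]])

definition (in vector_space) independent_family :: "'c set \<Rightarrow> ('c \<Rightarrow> 'b) \<Rightarrow> bool" where
  "independent_family E v \<longleftrightarrow> (\<forall>c. (\<Sum>a\<in>E. c a *s v a) = 0 \<longrightarrow> (\<forall>a\<in>E. c a = 0))"

lemma (in vector_space) independent_family_coeffs_unique:
  assumes "independent_family E v" "(\<Sum>a\<in>E. c a *s v a) = (\<Sum>a\<in>E. d a *s v a)" "a \<in> E"
  shows "c a = d a"
proof -
  have "(\<Sum>a\<in>E. (c a - d a) *s v a) = 0"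
    using assms(2) by (simp add: scale_left_diff_distrib sum_subtractf)
  then show ?thesis using assms(1,3) unfolding independent_family_def by fastforce
qed

lemma (in vector_space) independent_family_inj_on:
  assumes "finite E" "independent_family E v"
  shows "inj_on v E"
proof (rule inj_onI)
  fix a b assume a: "a \<in> E" and b: "b \<in> E" and "v a = v b"
  have delta: "(\<Sum>x\<in>E. (if x = y then 1 else 0) *s v x) = v y" if "y \<in> E" for y
  proof -
    have "(\<Sum>x\<in>E. (if x = y then 1 else 0) *s v x) = (\<Sum>x\<in>E. if x = y then v x else 0)"
      by (rule sum.cong) simp_all
    then show ?thesis using assms(1) that by simp
  qed
  have "(\<Sum>x\<in>E. (if x = a then 1 else 0) *s v x) = (\<Sum>x\<in>E. (if x = b then 1 else 0) *s v x)"
    using a b \<open>v a = v b\<close> by (simp only: delta)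
  from independent_family_coeffs_unique[OF assms(2) this a] show "a = b"
    by (simp split: if_splits)
qed

lemma (in vector_space) independent_family_independent:
  assumes "finite E" "independent_family E v"
  shows "independent (v ` E)"
proof (rule independent_if_scalars_zero)
  show "finite (v ` E)" using assms(1) by simp
  fix f x assume sum: "(\<Sum>x\<in>v ` E. f x *s x) = 0" and x: "x \<in> v ` E"
  have "(\<Sum>a\<in>E. f (v a) *s v a) = 0"
    using sum by (simp add: sum.reindex[OF independent_family_inj_on[OF assms]])
  then show "f x = 0"
    using assms(2) x unfolding independent_family_def by (auto dest: spec[of _ "\<lambda>a. f (v a)"])
qed

lemma (in vector_space) independent_family_if_span_contains:
  assumes fin: "finite E" and w: "independent_family E w" and span_w: "w ` E \<subseteq> span (v ` E)"
  shows "independent_family E v"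
  unfolding independent_family_def
proof (intro allI impI ballI, rule ccontr)
  fix c a0 assume sum: "(\<Sum>a\<in>E. c a *s v a) = 0" and a0: "a0 \<in> E" and ne: "c a0 \<noteq> 0"
  let ?S = "v ` (E - {a0})"
  have rest: "c a0 *s v a0 = - (\<Sum>a\<in>E - {a0}. c a *s v a)"
    using sum sum.remove[OF fin a0, of "\<lambda>a. c a *s v a"] by (simp add: eq_neg_iff_add_eq_0)
  have "v a0 = inverse (c a0) *s (c a0 *s v a0)" using ne by simp
  also have "\<dots> = - (inverse (c a0) *s (\<Sum>a\<in>E - {a0}. c a *s v a))" unfolding rest by simp
  also have "\<dots> \<in> span ?S" by (intro span_neg span_scale span_sum span_base) simp
  finally have "v a0 \<in> span ?S" .
  have "v a \<in> span ?S" if "a \<in> E" for a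
  proof (cases "a = a0")
    case False
    with that show ?thesis by (intro span_base) blast
  qed (use \<open>v a0 \<in> span ?S\<close> in simp)
  then have "span (v ` E) \<subseteq> span ?S"
    by (intro span_minimal subspace_span image_subsetI)
  with span_w have "w ` E \<subseteq> span ?S" by (rule order_trans)
  then have "card (w ` E) \<le> card ?S"
    using independent_span_bound[OF _ independent_family_independent[OF fin w]] fin by simp
  also have "\<dots> \<le> card (E - {a0})" by (rule card_image_le) (use fin in simp)
  also have "\<dots> < card E" using fin a0 by (rule card_Diff1_less)
  also have "\<dots> = card (w ` E)" using card_image[OF independent_family_inj_on[OF fin w]] by simp
  finally show False by simp
qed

lemma finite_exps: "finite (exps p n)"
proof -
  have "exps p n \<subseteq> {f. \<forall>x. (x \<in> {..<n} \<longrightarrow> f x \<in> {..<p}) \<and> (x \<notin> {..<n} \<longrightarrow> f x = 0)}"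
    unfolding exps_def by auto
  then show ?thesis by (rule finite_subset) (rule finite_set_of_finite_funs; simp)
qed

definition single_exp :: "nat \<Rightarrow> nat \<Rightarrow> nat \<Rightarrow> nat" where
  "single_exp k m = (\<lambda>_. 0)(k := m)"

lemma single_exp_in_exps: "k < n \<Longrightarrow> m < p \<Longrightarrow> single_exp k m \<in> exps p n"
  by (simp add: single_exp_def exps_def)

lemma single_exp_eq_iff: "m \<noteq> 0 \<Longrightarrow> single_exp k m = single_exp k' m \<longleftrightarrow> k = k'"
  unfolding single_exp_def by (metis fun_upd_same fun_upd_other)

lemma sum_single_exp: "k < n \<Longrightarrow> (\<Sum>i<n. single_exp k m i) = m"
  by (simp add: single_exp_def fun_upd_apply)

lemma monom_t_add: "monom_t n s (\<lambda>i. a i + b i) = monom_t n s a * monom_t n s b"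
  unfolding monom_t_def by (simp only: power_add prod.distrib)

lemma monom_t_single_exp:
  assumes "k < n"
  shows "monom_t n s (single_exp k m) = s k ^ m"
proof -
  have "monom_t n s (single_exp k m) = (\<Prod>i<n. if i = k then s k ^ m else 1)"
    unfolding monom_t_def by (rule prod.cong) (simp_all add: single_exp_def)
  then show ?thesis using assms by simp
qed

lemma monom_t_restrict: "monom_t n s b = monom_t n s (\<lambda>i. if i < n then b i else 0)"
  by (simp add: monom_t_def)

lemma subalg_gen_mono:
  assumes "G' \<subseteq> subalg_gen R iota G"
  shows "subalg_gen R iota G' \<subseteq> subalg_gen R iota G"
proof
  fix x assume "x \<in> subalg_gen R iota G'"
  then show "x \<in> subalg_gen R iota G"
    by induction (use assms in \<open>auto intro: subalg_gen.intros\<close>)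
qed

locale char_p_algebra = comm_ring_hom iota
  for iota :: "'k::field \<Rightarrow> 'h::comm_ring_1" +
  fixes p n :: nat
  assumes prime_p: "prime p" and char_p: "of_nat p = (0::'k)"
begin

sublocale H: vector_space "\<lambda>c h. iota c * h"
  by unfold_locales (simp_all add: hom_distribs algebra_simps)

(* As a simp rule, iota a * (iota b * x) = iota (a * b) * x makes the simplifier loop. *)
declare H.scale_scale [simp del]

lemma char_p_H: "of_nat p = (0::'h)"
  using hom_of_nat[of p] char_p by simp

lemma one_less_p: "1 < p"
  using prime_p by (rule prime_gt_1_nat)

definition col_comb :: "(nat \<Rightarrow> 'h) \<Rightarrow> 'k mat \<Rightarrow> nat \<Rightarrow> 'h" where
  "col_comb s M i = (\<Sum>j<n. iota (M $$ (j, i)) * s j)"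

definition has_assoc_matrix :: "(nat \<Rightarrow> 'h) \<Rightarrow> 'k mat \<Rightarrow> bool" where
  "has_assoc_matrix s A \<longleftrightarrow> (\<forall>i<n. s i ^ p = col_comb s A i)"

definition monom_span :: "'k set \<Rightarrow> (nat \<Rightarrow> 'h) \<Rightarrow> 'h set" where
  "monom_span Q s =
     {\<Sum>a\<in>exps p n. iota (c a) * monom_t n s a | c. \<forall>a\<in>exps p n. c a \<in> Q}"

lemma monom_spanI:
  "\<forall>a\<in>exps p n. c a \<in> Q \<Longrightarrow> (\<Sum>a\<in>exps p n. iota (c a) * monom_t n s a) \<in> monom_span Q s"
  unfolding monom_span_def by blast

lemma monom_spanE:
  assumes "x \<in> monom_span Q s"
  obtains c where "\<forall>a\<in>exps p n. c a \<in> Q" "x = (\<Sum>a\<in>exps p n. iota (c a) * monom_t n s a)"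
  using assms unfolding monom_span_def by blast

lemma monom_span_add:
  assumes Q: "is_subring Q" and "x \<in> monom_span Q s" "y \<in> monom_span Q s"
  shows "x + y \<in> monom_span Q s"
proof -
  obtain c where c: "\<forall>a\<in>exps p n. c a \<in> Q"
    and x: "x = (\<Sum>a\<in>exps p n. iota (c a) * monom_t n s a)"
    using assms(2) by (rule monom_spanE)
  obtain d where d: "\<forall>a\<in>exps p n. d a \<in> Q"
    and y: "y = (\<Sum>a\<in>exps p n. iota (d a) * monom_t n s a)"
    using assms(3) by (rule monom_spanE)
  have "x + y = (\<Sum>a\<in>exps p n. iota (c a + d a) * monom_t n s a)"
    unfolding x y by (simp add: hom_add distrib_right sum.distrib)
  also have "\<dots> \<in> monom_span Q s"
    using Q c d by (intro monom_spanI) (simp add: subring_closed)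
  finally show ?thesis .
qed

lemma monom_span_scale:
  assumes Q: "is_subring Q" and "q \<in> Q" "x \<in> monom_span Q s"
  shows "iota q * x \<in> monom_span Q s"
proof -
  obtain c where c: "\<forall>a\<in>exps p n. c a \<in> Q"
    and x: "x = (\<Sum>a\<in>exps p n. iota (c a) * monom_t n s a)"
    using assms(3) by (rule monom_spanE)
  have "iota q * x = (\<Sum>a\<in>exps p n. iota (q * c a) * monom_t n s a)"
    unfolding x by (simp add: hom_mult sum_distrib_left mult.assoc)
  also have "\<dots> \<in> monom_span Q s"
    using Q c \<open>q \<in> Q\<close> by (intro monom_spanI) (simp add: subring_closed)
  finally show ?thesis .
qed

lemma monom_span_zero: "is_subring Q \<Longrightarrow> 0 \<in> monom_span Q s"
  using monom_spanI[of "\<lambda>_. 0" Q s] by (simp add: subring_closed)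

lemma monom_span_sum:
  assumes "is_subring Q" "\<And>i. i \<in> I \<Longrightarrow> f i \<in> monom_span Q s"
  shows "sum f I \<in> monom_span Q s"
  using assms(2)
  by (induction I rule: infinite_finite_induct)
    (simp_all add: monom_span_zero[OF assms(1)] monom_span_add[OF assms(1)])

lemma monom_span_basis:
  assumes "is_subring Q" "b \<in> exps p n"
  shows "monom_t n s b \<in> monom_span Q s"
proof -
  have "(\<Sum>a\<in>exps p n. iota (if a = b then 1 else 0) * monom_t n s a)
      = (\<Sum>a\<in>exps p n. if a = b then monom_t n s a else 0)"
    by (rule sum.cong) simp_all
  also have "\<dots> = monom_t n s b" using assms(2) finite_exps by simp
  finally show ?thesis
    using monom_spanI[of "\<lambda>a. if a = b then 1 else 0" Q s] assms(1) by (simp add: subring_closed)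
qed

lemma monom_span_subset_span: "monom_span Q s \<subseteq> H.span (monom_t n s ` exps p n)"
proof
  fix x assume "x \<in> monom_span Q s"
  then obtain c where "x = (\<Sum>a\<in>exps p n. iota (c a) * monom_t n s a)" by (rule monom_spanE)
  also have "\<dots> \<in> H.span (monom_t n s ` exps p n)"
    by (intro H.span_sum H.span_scale H.span_base imageI)
  finally show "x \<in> H.span (monom_t n s ` exps p n)" .
qed

lemma monom_t_reduce:
  assumes "has_assoc_matrix s A" "i < n" "p \<le> b i"
  shows "monom_t n s b
           = (\<Sum>j<n. iota (A $$ (j, i)) * monom_t n s (\<lambda>k. (b(i := b i - p)) k + single_exp j 1 k))"
proof -
  define b' where "b' = b(i := b i - p)"
  have b: "b = (\<lambda>k. b' k + single_exp i p k)"
    using assms(3) by (auto simp: b'_def single_exp_def)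
  have "monom_t n s b = monom_t n s b' * s i ^ p"
    by (subst b) (simp only: monom_t_add monom_t_single_exp[OF assms(2)])
  also have "s i ^ p = (\<Sum>j<n. iota (A $$ (j, i)) * s j)"
    using assms(1,2) by (simp add: has_assoc_matrix_def col_comb_def)
  also have "\<dots> = (\<Sum>j<n. iota (A $$ (j, i)) * monom_t n s (single_exp j 1))"
    by (rule sum.cong) (simp_all add: monom_t_single_exp)
  also have "monom_t n s b' * \<dots> = (\<Sum>j<n. iota (A $$ (j, i)) * monom_t n s (\<lambda>k. b' k + single_exp j 1 k))"
    by (simp only: sum_distrib_left monom_t_add mult.left_commute)
  finally show ?thesis unfolding b'_def .
qed

lemma subalg_gen_sum:
  assumes "0 \<in> Q" "\<And>x. x \<in> A \<Longrightarrow> f x \<in> subalg_gen Q iota G"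
  shows "sum f A \<in> subalg_gen Q iota G"
  using assms(2) subalg_gen.scal[OF assms(1), of iota G]
  by (induction A rule: infinite_finite_induct) (simp_all add: subalg_gen.add)

context
  fixes Q :: "'k set" and s :: "nat \<Rightarrow> 'h" and A :: "'k mat"
  assumes Q: "is_subring Q" and s_A: "has_assoc_matrix s A" and A_Q: "A \<in> mat_over n Q"
begin

lemma monom_t_mem_monom_span: "monom_t n s b \<in> monom_span Q s"
proof (induction "\<Sum>i<n. b i" arbitrary: b rule: less_induct)
  case less
  show ?case
  proof (cases "\<exists>i<n. p \<le> b i")
    case True
    then obtain i where i: "i < n" "p \<le> b i" by blast
    let ?b' = "b(i := b i - p)"
    show ?thesis unfolding monom_t_reduce[of s A i b, OF s_A i]
    proof (intro monom_span_sum[OF Q] monom_span_scale[OF Q])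
      fix j assume "j \<in> {..<n}"
      then have j: "j < n" by simp
      show "A $$ (j, i) \<in> Q" by (rule mat_over_entry[OF A_Q j i(1)])
      have "(\<Sum>k<n. ?b' k) + p = (\<Sum>k<n. b k)"
        using i by (simp add: sum.remove[of "{..<n}" i])
      then have "(\<Sum>k<n. ?b' k + single_exp j 1 k) < (\<Sum>k<n. b k)"
        using one_less_p by (simp add: sum.distrib sum_single_exp[OF j])
      then show "monom_t n s (\<lambda>k. ?b' k + single_exp j 1 k) \<in> monom_span Q s"
        by (rule less)
    qed
  next
    case False
    then have "(\<lambda>i. if i < n then b i else 0) \<in> exps p n" by (auto simp: exps_def)
    then show ?thesis by (subst monom_t_restrict) (rule monom_span_basis[OF Q])
  qed
qed

lemma monom_span_mult:
  assumes "x \<in> monom_span Q s" "y \<in> monom_span Q s"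
  shows "x * y \<in> monom_span Q s"
proof -
  obtain c where c: "\<forall>a\<in>exps p n. c a \<in> Q"
    and x: "x = (\<Sum>a\<in>exps p n. iota (c a) * monom_t n s a)"
    using assms(1) by (rule monom_spanE)
  obtain d where d: "\<forall>a\<in>exps p n. d a \<in> Q"
    and y: "y = (\<Sum>a\<in>exps p n. iota (d a) * monom_t n s a)"
    using assms(2) by (rule monom_spanE)
  have "x * y = (\<Sum>a\<in>exps p n. \<Sum>b\<in>exps p n. iota (c a * d b) * monom_t n s (\<lambda>i. a i + b i))"
    unfolding x y sum_product by (simp add: hom_mult monom_t_add mult_ac)
  also have "\<dots> \<in> monom_span Q s"
    using c d by (intro monom_span_sum[OF Q] monom_span_scale[OF Q] monom_t_mem_monom_span)
      (simp_all add: subring_closed[OF Q])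
  finally show ?thesis .
qed

lemma monom_span_one: "1 \<in> monom_span Q s"
  using monom_t_mem_monom_span[of "\<lambda>_. 0"] by (simp add: monom_t_def)

lemma monom_span_prod: "(\<And>i. i \<in> I \<Longrightarrow> f i \<in> monom_span Q s) \<Longrightarrow> prod f I \<in> monom_span Q s"
  by (induction I rule: infinite_finite_induct) (simp_all add: monom_span_one monom_span_mult)

lemma monom_span_power: "x \<in> monom_span Q s \<Longrightarrow> x ^ k \<in> monom_span Q s"
  using monom_span_prod[of "{..<k}" "\<lambda>_. x"] by simp

lemma subalg_gen_subset_monom_span: "subalg_gen Q iota {s i | i. i < n} \<subseteq> monom_span Q s"
proof
  fix x assume "x \<in> subalg_gen Q iota {s i | i. i < n}"
  then show "x \<in> monom_span Q s"
  proof induction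
    case (scal r)
    then show ?case using monom_span_scale[OF Q scal monom_span_one] by simp
  next
    case (gen g)
    then obtain i where "i < n" "g = s i" by blast
    then show ?case using monom_t_mem_monom_span[of "single_exp i 1"] by (simp add: monom_t_single_exp)
  next
    case (add x y)
    from add.IH show ?case by (rule monom_span_add[OF Q])
  next
    case (mult x y)
    from mult.IH show ?case by (rule monom_span_mult)
  qed
qed

end

lemma independent_monoms_transfer:
  assumes "H.independent_family (exps p n) (monom_t n t)" "has_assoc_matrix s A" "A \<in> carrier_mat n n"
    and "\<And>j. j < n \<Longrightarrow> t j \<in> monom_span UNIV s"
  shows "H.independent_family (exps p n) (monom_t n s)"
proof (rule H.independent_family_if_span_contains[OF finite_exps assms(1)])
  note closed = is_subring_UNIV assms(2) mat_over_UNIV[OF assms(3)]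
  have "monom_t n t a \<in> monom_span UNIV s" for a
    unfolding monom_t_def using assms(4)
    by (intro monom_span_prod[OF closed] monom_span_power[OF closed]) simp
  then show "monom_t n t ` exps p n \<subseteq> H.span (monom_t n s ` exps p n)"
    using monom_span_subset_span by blast
qed

lemma coeff_mem_if_lincomb_mem_monom_span:
  assumes indep: "H.independent_family (exps p n) (monom_t n s)"
    and mem: "(\<Sum>j<n. iota (u j) * s j) \<in> monom_span Q s" and k: "k < n"
  shows "u k \<in> Q"
proof -
  obtain c where c: "\<forall>a\<in>exps p n. c a \<in> Q"
    and eq: "(\<Sum>j<n. iota (u j) * s j) = (\<Sum>a\<in>exps p n. iota (c a) * monom_t n s a)"
    using mem by (rule monom_spanE)
  define d where "d a = (\<Sum>j<n. if a = single_exp j 1 then u j else 0)" for a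
  have "(\<Sum>a\<in>exps p n. iota (d a) * monom_t n s a)
      = (\<Sum>j<n. \<Sum>a\<in>exps p n. iota (if a = single_exp j 1 then u j else 0) * monom_t n s a)"
    unfolding d_def hom_sum sum_distrib_right by (rule sum.swap)
  also have "\<dots> = (\<Sum>j<n. iota (u j) * s j)"
  proof (rule sum.cong[OF refl])
    fix j assume "j \<in> {..<n}"
    then have j: "j < n" by simp
    have "(\<Sum>a\<in>exps p n. iota (if a = single_exp j 1 then u j else 0) * monom_t n s a)
        = (\<Sum>a\<in>exps p n. if a = single_exp j 1 then iota (u j) * monom_t n s a else 0)"
      by (rule sum.cong) simp_all
    also have "\<dots> = iota (u j) * s j"
      using finite_exps single_exp_in_exps[OF j one_less_p] by (simp add: monom_t_single_exp[OF j])
    finally show "(\<Sum>a\<in>exps p n. iota (if a = single_exp j 1 then u j else 0) * monom_t n s a)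
        = iota (u j) * s j" .
  qed
  finally have "c (single_exp k 1) = d (single_exp k 1)"
    using H.independent_family_coeffs_unique[OF indep] eq single_exp_in_exps[OF k one_less_p] by simp
  also have "d (single_exp k 1) = (\<Sum>j<n. if j = k then u j else 0)"
    unfolding d_def by (rule sum.cong) (simp_all add: single_exp_eq_iff eq_commute)
  also have "\<dots> = u k" using k by simp
  finally show ?thesis using c single_exp_in_exps[OF k one_less_p] by metis
qed

lemma col_comb_mult:
  assumes "M \<in> carrier_mat n n" "U \<in> carrier_mat n n" "i < n"
  shows "col_comb t (M * U) i = col_comb (col_comb t M) U i"
proof -
  have "col_comb t (M * U) i = (\<Sum>j<n. (\<Sum>k<n. iota (M $$ (j, k)) * iota (U $$ (k, i))) * t j)"
    unfolding col_comb_def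
    by (rule sum.cong) (simp_all add: index_mult_mat_sum[OF assms(1,2) _ assms(3)] hom_sum hom_mult
                        del: index_mult_mat(1))
  also have "\<dots> = (\<Sum>j<n. \<Sum>k<n. iota (U $$ (k, i)) * (iota (M $$ (j, k)) * t j))"
    by (simp add: sum_distrib_left sum_distrib_right mult_ac)
  also have "\<dots> = col_comb (col_comb t M) U i"
    unfolding col_comb_def sum_distrib_left by (rule sum.swap)
  finally show ?thesis .
qed

lemma col_comb_one:
  assumes "i < n"
  shows "col_comb t (1\<^sub>m n) i = t i"
proof -
  have "col_comb t (1\<^sub>m n) i = (\<Sum>j<n. if j = i then t j else 0)"
    unfolding col_comb_def by (rule sum.cong) (simp_all add: assms)
  then show ?thesis using assms by simp
qed

lemma power_col_comb:
  assumes "has_assoc_matrix t B" "B \<in> carrier_mat n n" "M \<in> carrier_mat n n" "i < n"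
  shows "col_comb t M i ^ p = col_comb t (B * mat_frob p M) i"
proof -
  have "col_comb t M i ^ p = (\<Sum>j<n. iota (mat_frob p M $$ (j, i)) * col_comb t B j)"
    unfolding col_comb_def[of t M] power_sum_prime_char[OF prime_p char_p_H]
    using assms
    by (intro sum.cong refl) (simp add: has_assoc_matrix_def mat_frob_def power_mult_distrib hom_power)
  also have "\<dots> = col_comb t (B * mat_frob p M) i"
    using col_comb_mult[OF assms(2) _ assms(4), of "mat_frob p M" t] assms(3) by (simp add: col_comb_def)
  finally show ?thesis .
qed

lemma has_assoc_matrix_col_comb:
  assumes "has_assoc_matrix t B" "B \<in> carrier_mat n n" "M \<in> GL_over n S"
  shows "has_assoc_matrix (col_comb t M) (mat_inv n M * B * mat_frob p M)"
  unfolding has_assoc_matrix_def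
proof (intro allI impI)
  fix i assume i: "i < n"
  let ?A = "mat_inv n M * B * mat_frob p M"
  note M = GL_over_carrier[OF assms(3)] GL_over_mat_inv_carrier[OF assms(3)]
  have A: "?A \<in> carrier_mat n n" using assms(2) M by (simp add: mult_carrier_mat[of _ n n])
  have "col_comb t M i ^ p = col_comb t (B * mat_frob p M) i"
    by (rule power_col_comb[OF assms(1,2) M(1) i])
  also have "B * mat_frob p M = M * ?A"
    using mult_mat_inv_mult[OF assms(3), of "B * mat_frob p M"] assms(2) M
    by (simp add: assoc_mult_mat[of _ n n _ n _ n])
  also have "col_comb t (M * ?A) i = col_comb (col_comb t M) ?A i"
    by (rule col_comb_mult[OF M(1) A i])
  finally show "col_comb t M i ^ p = col_comb (col_comb t M) ?A i" .
qed

lemma col_comb_mem_subalg_gen: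
  assumes "is_subring Q" "U \<in> mat_over n Q" "i < n"
  shows "col_comb s U i \<in> subalg_gen Q iota {s k | k. k < n}"
  unfolding col_comb_def
  using assms by (intro subalg_gen_sum subalg_gen.mult subalg_gen.scal subalg_gen.gen mat_over_entry)
    (auto simp: subring_closed)

lemma H_order_col_comb: "H_order Q iota n t M = subalg_gen Q iota {col_comb t M i | i. i < n}"
  by (simp add: H_order_def col_comb_def)

lemma H_order_mult_subset:
  assumes "is_subring Q" "M \<in> carrier_mat n n" "U \<in> mat_over n Q"
  shows "H_order Q iota n t (M * U) \<subseteq> H_order Q iota n t M"
  unfolding H_order_col_comb
proof (rule subalg_gen_mono, safe)
  fix i assume "i < n"
  then show "col_comb t (M * U) i \<in> subalg_gen Q iota {col_comb t M k | k. k < n}"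
    using col_comb_mult[OF assms(2) mat_over_carrier[OF assms(3)]] col_comb_mem_subalg_gen[OF assms(1,3)]
    by simp
qed

lemma H_order_mult_GL:
  assumes "is_subring Q" "M \<in> carrier_mat n n" "U \<in> GL_over n Q"
  shows "H_order Q iota n t (M * U) = H_order Q iota n t M"
proof
  show "H_order Q iota n t (M * U) \<subseteq> H_order Q iota n t M"
    by (rule H_order_mult_subset[OF assms(1,2) GL_over_mat_over[OF assms(3)]])
  have "M = (M * U) * mat_inv n U"
    using assms(2) GL_over_carrier[OF assms(3)] GL_over_mat_inv_carrier[OF assms(3)] GL_over_mat_inv(2)[OF assms(3)]
    by simp
  then show "H_order Q iota n t M \<subseteq> H_order Q iota n t (M * U)"
    using H_order_mult_subset[OF assms(1) _ GL_over_mat_inv(1)[OF assms(3)], of "M * U"]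
      assms(2) GL_over_carrier[OF assms(3)] by simp
qed

lemma mat_inv_mult_mem_if_H_order_subset:
  assumes Q: "is_subring Q" and t_B: "has_assoc_matrix t B" and B: "B \<in> carrier_mat n n"
    and t_indep: "H.independent_family (exps p n) (monom_t n t)"
    and M: "M \<in> GL_over n UNIV" and M': "M' \<in> GL_over n UNIV"
    and A_Q: "mat_inv n M * B * mat_frob p M \<in> mat_over n Q"
    and sub: "H_order Q iota n t M' \<subseteq> H_order Q iota n t M"
  shows "mat_inv n M * M' \<in> mat_over n Q"
proof -
  let ?s = "col_comb t M" and ?A = "mat_inv n M * B * mat_frob p M" and ?U = "mat_inv n M * M'"
  note carriers = GL_over_carrier[OF M] GL_over_carrier[OF M'] GL_over_mat_inv_carrier[OF M]
  have s_A: "has_assoc_matrix ?s ?A" by (rule has_assoc_matrix_col_comb[OF t_B B M])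
  have "t j \<in> monom_span UNIV ?s" if j: "j < n" for j
  proof -
    have "t j = col_comb ?s (mat_inv n M) j"
      using col_comb_one[OF j, of t] col_comb_mult[OF carriers(1,3) j, of t] GL_over_mat_inv(2)[OF M] by simp
    also have "\<dots> \<in> subalg_gen UNIV iota {?s k | k. k < n}"
      by (rule col_comb_mem_subalg_gen[OF is_subring_UNIV mat_over_UNIV[OF carriers(3)] j])
    also have "\<dots> \<subseteq> monom_span UNIV ?s"
      by (rule subalg_gen_subset_monom_span[OF is_subring_UNIV s_A mat_over_UNIV[OF mat_over_carrier[OF A_Q]]])
    finally show ?thesis .
  qed
  then have s_indep: "H.independent_family (exps p n) (monom_t n ?s)"
    by (rule independent_monoms_transfer[OF t_indep s_A mat_over_carrier[OF A_Q]])
  have "?U $$ (k, i) \<in> Q" if k: "k < n" and i: "i < n" for k i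
  proof -
    have "col_comb ?s ?U i = col_comb t M' i"
      using col_comb_mult[OF carriers(1) _ i, of ?U t] mult_mat_inv_mult[OF M carriers(2)] carriers by simp
    also have "\<dots> \<in> H_order Q iota n t M'"
      unfolding H_order_col_comb using i by (intro subalg_gen.gen) blast
    also have "\<dots> \<subseteq> monom_span Q ?s"
      using sub subalg_gen_subset_monom_span[OF Q s_A A_Q] unfolding H_order_col_comb by blast
    finally show ?thesis
      unfolding col_comb_def[of ?s ?U i] by (rule coeff_mem_if_lincomb_mem_monom_span[OF s_indep _ k])
  qed
  then show ?thesis using carriers by (simp add: mat_over_def)
qed

end

theorem corollary4p3:
  fixes R :: "'k::field set" and p n :: nat
    and iota :: "'k \<Rightarrow> 'h::comm_ring_1" and t :: "nat \<Rightarrow> 'h"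
    and B \<Theta> \<Theta>' :: "'k mat"
  assumes "is_dvr_with_frac_field R"
    and "prime p" and "of_nat p = (0::'k)"
    and "prim_gen_algebra p n iota t B"
    and "B \<in> mat_over n R"
    and "\<Theta> \<in> GL_over n (UNIV :: 'k set)"
    and "mat_inv n \<Theta> * B * mat_frob p \<Theta> \<in> mat_over n R"
    and "\<Theta>' \<in> GL_over n (UNIV :: 'k set)"
  shows "(mat_inv n \<Theta>' * B * mat_frob p \<Theta>' \<in> mat_over n R \<and>
           H_order R iota n t \<Theta>' = H_order R iota n t \<Theta>)
         \<longleftrightarrow> (\<exists>U \<in> GL_over n R. \<Theta>' = \<Theta> * U)"
proof -
  interpret char_p_algebra iota p n
    using assms(2-4) unfolding prim_gen_algebra_def by unfold_locales auto
  have R: "is_subring R" using assms(1) by (rule dvr_is_subring)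
  have t_B: "has_assoc_matrix t B" and t_indep: "H.independent_family (exps p n) (monom_t n t)"
    using assms(4) unfolding prim_gen_algebra_def has_assoc_matrix_def col_comb_def H.independent_family_def
    by auto
  have B: "B \<in> carrier_mat n n" using assms(5) by (rule mat_over_carrier)
  note order_subset = mat_inv_mult_mem_if_H_order_subset[OF R t_B B t_indep]
  show ?thesis
  proof
    assume a: "mat_inv n \<Theta>' * B * mat_frob p \<Theta>' \<in> mat_over n R \<and>
      H_order R iota n t \<Theta>' = H_order R iota n t \<Theta>"
    have "mat_inv n \<Theta> * \<Theta>' \<in> GL_over n R"
      using order_subset[OF assms(6,8,7)] order_subset[OF assms(8,6)] a
        mat_inv_mult_inverse[OF assms(6,8)] by (intro GL_overI) auto
    moreover have "\<Theta>' = \<Theta> * (mat_inv n \<Theta> * \<Theta>')"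
      using mult_mat_inv_mult[OF assms(6) GL_over_carrier[OF assms(8)]] by simp
    ultimately show "\<exists>U \<in> GL_over n R. \<Theta>' = \<Theta> * U" ..
  next
    assume "\<exists>U \<in> GL_over n R. \<Theta>' = \<Theta> * U"
    then obtain U where U: "U \<in> GL_over n R" and \<Theta>': "\<Theta>' = \<Theta> * U" ..
    have "mat_inv n \<Theta>' * B * mat_frob p \<Theta>' \<in> mat_over n R"
      unfolding \<Theta>' by (rule assoc_matrix_mult_mem_mat_over[OF assms(2,3) R B assms(6) U assms(7)])
    moreover have "H_order R iota n t \<Theta>' = H_order R iota n t \<Theta>"
      unfolding \<Theta>' by (rule H_order_mult_GL[OF R GL_over_carrier[OF assms(6)] U])
    ultimately show "mat_inv n \<Theta>' * B * mat_frob p \<Theta>' \<in> mat_over n R \<and>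
      H_order R iota n t \<Theta>' = H_order R iota n t \<Theta>" ..
  qed
qed

end
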